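(* Let $B$ be any group, $\sigma=(1,2)$, and let $w=(r_1,\ r_1^{-1}[f,g])\in B\wr C_2$ with $r_1,f,g\in B$. Put $a_{2,1}=(f^{-1})^{r_1^{-1}}$, $a_{2,2}=r_1a_{2,1}$, $a_{1,2}=g^{a_{2,2}^{-1}}$. Then $$w=\big[(e,a_{1,2})\sigma,\ (a_{2,1},a_{2,2})\big].$$
   Context: $B\wr C_2=B^2\rtimes C_2$, elements written $(g_1,g_2)\pi$ with multiplication $(g_1,g_2)\pi\cdot(h_1,h_2)\tau=(g_1h_{\pi(1)},g_2h_{\pi(2)})\pi\tau$. Conventions: $[a,b]=aba^{-1}b^{-1}$, $a^b=bab^{-1}$. *)

theory Defs
  imports "HOL-Algebra.Group"
begin

text \<open>An element (g1,g2)pi is encoded as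
  the triple (g1, g2, p) where p = True means pi = sigma = (1,2) and p = False means pi = id.
  Multiplication: (g1,g2)pi (h1,h2)tau = (g1 h_{pi(1)}, g2 h_{pi(2)}) pi tau.\<close>

definition wr2 :: "('a, 'm) monoid_scheme \<Rightarrow> ('a \<times> 'a \<times> bool) monoid" where
  "wr2 B = \<lparr> carrier = carrier B \<times> carrier B \<times> UNIV,
             mult = (\<lambda>(g1, g2, p) (h1, h2, q).
                       (if p then (g1 \<otimes>\<^bsub>B\<^esub> h2, g2 \<otimes>\<^bsub>B\<^esub> h1, p \<noteq> q)
                             else (g1 \<otimes>\<^bsub>B\<^esub> h1, g2 \<otimes>\<^bsub>B\<^esub> h2, q))),
             one = (\<one>\<^bsub>B\<^esub>, \<one>\<^bsub>B\<^esub>, False) \<rparr>"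

definition commutator :: "('a, 'm) monoid_scheme \<Rightarrow> 'a \<Rightarrow> 'a \<Rightarrow> 'a" where
  "commutator G a b = a \<otimes>\<^bsub>G\<^esub> b \<otimes>\<^bsub>G\<^esub> inv\<^bsub>G\<^esub> a \<otimes>\<^bsub>G\<^esub> inv\<^bsub>G\<^esub> b"

text \<open>Conjugation a^b = b a b^{-1}.\<close>
definition conjug :: "('a, 'm) monoid_scheme \<Rightarrow> 'a \<Rightarrow> 'a \<Rightarrow> 'a" where
  "conjug G a b = b \<otimes>\<^bsub>G\<^esub> a \<otimes>\<^bsub>G\<^esub> inv\<^bsub>G\<^esub> b"

end

theory Submission
  imports Defs
begin

text \<open>Multiplying out, the commutator of \<open>(e, a)\<sigma>\<close> with a base element \<open>(b\<^sub>1, b\<^sub>2)\<close> is the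
  base element \<open>(b\<^sub>2 b\<^sub>1\<^sup>-\<^sup>1, a b\<^sub>1 a\<^sup>-\<^sup>1 b\<^sub>2\<^sup>-\<^sup>1)\<close>. With the given choice of \<open>a\<^sub>2\<^sub>1, a\<^sub>2\<^sub>2, a\<^sub>1\<^sub>2\<close> the
  first coordinate is \<open>r\<^sub>1\<close>, and the second telescopes to \<open>r\<^sub>1\<^sup>-\<^sup>1 f g f\<^sup>-\<^sup>1 g\<^sup>-\<^sup>1\<close>.\<close>

lemma carrier_wr2 [simp]: "carrier (wr2 B) = carrier B \<times> carrier B \<times> UNIV"
  by (simp add: wr2_def)

lemma one_wr2 [simp]: "\<one>\<^bsub>wr2 B\<^esub> = (\<one>\<^bsub>B\<^esub>, \<one>\<^bsub>B\<^esub>, False)"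
  by (simp add: wr2_def)

lemma mult_wr2 [simp]:
  "(g1, g2, True) \<otimes>\<^bsub>wr2 B\<^esub> (h1, h2, q) = (g1 \<otimes>\<^bsub>B\<^esub> h2, g2 \<otimes>\<^bsub>B\<^esub> h1, \<not> q)"
  "(g1, g2, False) \<otimes>\<^bsub>wr2 B\<^esub> (h1, h2, q) = (g1 \<otimes>\<^bsub>B\<^esub> h1, g2 \<otimes>\<^bsub>B\<^esub> h2, q)"
  by (simp_all add: wr2_def)

lemma group_wr2:
  assumes "group B"
  shows "group (wr2 B)"
proof -
  interpret group B by fact
  have left_inverse: "\<exists>y \<in> carrier (wr2 B). y \<otimes>\<^bsub>wr2 B\<^esub> (x1, x2, p) = \<one>\<^bsub>wr2 B\<^esub>"
    if "x1 \<in> carrier B" and "x2 \<in> carrier B" for x1 x2 p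
  proof (cases p)
    case True
    with that show ?thesis by (intro bexI[of _ "(inv\<^bsub>B\<^esub> x2, inv\<^bsub>B\<^esub> x1, True)"]) auto
  next
    case False
    with that show ?thesis by (intro bexI[of _ "(inv\<^bsub>B\<^esub> x1, inv\<^bsub>B\<^esub> x2, False)"]) auto
  qed
  show ?thesis
  proof (rule groupI)
    fix x
    assume "x \<in> carrier (wr2 B)"
    then show "\<exists>y \<in> carrier (wr2 B). y \<otimes>\<^bsub>wr2 B\<^esub> x = \<one>\<^bsub>wr2 B\<^esub>"
      using left_inverse by auto
  qed (auto simp: wr2_def m_assoc split: if_splits)
qed

lemma inv_wr2:
  assumes "group B" and "a \<in> carrier B" and "b \<in> carrier B"
  shows "inv\<^bsub>wr2 B\<^esub> (a, b, True) = (inv\<^bsub>B\<^esub> b, inv\<^bsub>B\<^esub> a, True)"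
    and "inv\<^bsub>wr2 B\<^esub> (a, b, False) = (inv\<^bsub>B\<^esub> a, inv\<^bsub>B\<^esub> b, False)"
proof -
  interpret group B by fact
  interpret W: group "wr2 B" using group_wr2 assms(1) .
  show "inv\<^bsub>wr2 B\<^esub> (a, b, True) = (inv\<^bsub>B\<^esub> b, inv\<^bsub>B\<^esub> a, True)"
    by (rule W.inv_equality) (simp_all add: assms)
  show "inv\<^bsub>wr2 B\<^esub> (a, b, False) = (inv\<^bsub>B\<^esub> a, inv\<^bsub>B\<^esub> b, False)"
    by (rule W.inv_equality) (simp_all add: assms)
qed

lemma commutator_wr2_swap_base:
  assumes "group B" and "a \<in> carrier B" and "b1 \<in> carrier B" and "b2 \<in> carrier B"
  shows "commutator (wr2 B) (\<one>\<^bsub>B\<^esub>, a, True) (b1, b2, False)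
       = (b2 \<otimes>\<^bsub>B\<^esub> inv\<^bsub>B\<^esub> b1, a \<otimes>\<^bsub>B\<^esub> b1 \<otimes>\<^bsub>B\<^esub> inv\<^bsub>B\<^esub> a \<otimes>\<^bsub>B\<^esub> inv\<^bsub>B\<^esub> b2, False)"
proof -
  interpret group B by fact
  show ?thesis
    using assms by (simp add: commutator_def inv_wr2 m_assoc del: inv_one)
qed

lemma (in group) conjug_closed [simp]:
  "a \<in> carrier G \<Longrightarrow> b \<in> carrier G \<Longrightarrow> conjug G a b \<in> carrier G"
  by (simp add: conjug_def)

lemma (in group) commutator_witness_coordinates:
  assumes "r1 \<in> carrier G" and "f \<in> carrier G" and "g \<in> carrier G"
    and a21_def: "a21 = conjug G (inv f) (inv r1)"
    and a22_def: "a22 = r1 \<otimes> a21"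
    and a12_def: "a12 = conjug G g (inv a22)"
  shows "a22 \<otimes> inv a21 = r1"
    and "a12 \<otimes> a21 \<otimes> inv a12 \<otimes> inv a22 = inv r1 \<otimes> commutator G f g"
proof -
  have cancel [simp]: "x \<otimes> (inv x \<otimes> y) = y" "inv x \<otimes> (x \<otimes> y) = y"
    if "x \<in> carrier G" and "y \<in> carrier G" for x y
    using that by (simp_all add: m_assoc[symmetric])
  have a21: "a21 = inv r1 \<otimes> inv f \<otimes> r1"
    using assms(1,2) by (simp add: a21_def conjug_def)
  have a22: "a22 = inv f \<otimes> r1"
    using assms(1,2) by (simp add: a22_def a21 m_assoc[symmetric])
  have a12: "a12 = inv r1 \<otimes> f \<otimes> g \<otimes> inv f \<otimes> r1"
    using assms(1-3) by (simp add: a12_def conjug_def a22 inv_mult_group m_assoc)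
  show "a22 \<otimes> inv a21 = r1"
    using assms(1,2) by (simp add: a22 a21 inv_mult_group m_assoc)
  show "a12 \<otimes> a21 \<otimes> inv a12 \<otimes> inv a22 = inv r1 \<otimes> commutator G f g"
    using assms(1-3) by (simp add: a12 a21 a22 inv_mult_group m_assoc commutator_def)
qed

theorem corollary1:
  fixes B :: "('a, 'm) monoid_scheme" and r1 f g :: 'a
  assumes "group B"
    and "r1 \<in> carrier B" and "f \<in> carrier B" and "g \<in> carrier B"
  shows "let a21 = conjug B (inv\<^bsub>B\<^esub> f) (inv\<^bsub>B\<^esub> r1);
             a22 = r1 \<otimes>\<^bsub>B\<^esub> a21;
             a12 = conjug B g (inv\<^bsub>B\<^esub> a22)
         in (r1, inv\<^bsub>B\<^esub> r1 \<otimes>\<^bsub>B\<^esub> commutator B f g, False)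
            = commutator (wr2 B) (\<one>\<^bsub>B\<^esub>, a12, True) (a21, a22, False)"
proof -
  interpret group B by fact
  show ?thesis
    using assms
    by (simp add: Let_def commutator_wr2_swap_base commutator_witness_coordinates)
qed

end
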